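(* Let $Z_1,Z_2$ be independent non-negative random variables and $Z_1',Z_2'$ independent non-negative random variables such that for each of $Z_1,Z_2,Z_1',Z_2'$: its law has a point mass at $0$ and a density on $(0,\infty)$, and its transform $\mathbb E e^{\theta Z}$ is nonzero for all complex $\theta$ with $\Re(\theta)\le0$. If $Z_1-Z_2\stackrel{\rm d}{=} Z_1'-Z_2'$, then $Z_1\stackrel{\rm d}{=}Z_1'$ and $Z_2\stackrel{\rm d}{=}Z_2'$. *)

theory Defs
  imports "HOL-Probability.Probability"
begin

definition atom0_density_law :: "real measure \<Rightarrow> bool" where
  "atom0_density_law \<mu> \<longleftrightarrow>
     emeasure \<mu> {0} > 0 \<and>
     (\<exists>f \<in> borel_measurable borel.
        \<forall>A \<in> sets borel. emeasure \<mu> (A \<inter> {0<..}) = (\<integral>\<^sup>+ x \<in> A \<inter> {0<..}. f x \<partial>lborel))"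

definition transform :: "'a measure \<Rightarrow> ('a \<Rightarrow> real) \<Rightarrow> complex \<Rightarrow> complex" where
  "transform M Z \<theta> = (\<integral> x. exp (\<theta> * complex_of_real (Z x)) \<partial>M)"

definition good_rv :: "'a measure \<Rightarrow> ('a \<Rightarrow> real) \<Rightarrow> bool" where
  "good_rv M Z \<longleftrightarrow>
     Z \<in> borel_measurable M \<and>
     (AE x in M. Z x \<ge> 0) \<and>
     atom0_density_law (distr M borel Z) \<and>
     (\<forall>\<theta>::complex. Re \<theta> \<le> 0 \<longrightarrow> transform M Z \<theta> \<noteq> 0)"

end

theory Submission
  imports Defs "HOL-Complex_Analysis.Complex_Analysis"
begin

(* For a law \<mu> on [0,\<infinity>) let \<phi>\<^sub>\<mu>(\<theta>) = E exp(\<theta> Z) on the closed left half-plane.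
   On the imaginary axis the hypothesis reads \<phi>\<^sub>1(\<theta>) \<phi>\<^sub>2(-\<theta>) = \<phi>\<^sub>1'(\<theta>) \<phi>\<^sub>2'(-\<theta>),
   so \<phi>\<^sub>1/\<phi>\<^sub>1' on the left half-plane and \<phi>\<^sub>2'(-\<theta>)/\<phi>\<^sub>2(-\<theta>) on the right half-plane
   glue to an entire function. It is bounded: the numerators have modulus at most 1, and every
   transform is bounded away from 0. Indeed \<phi>(\<theta>) = p + \<integral>\<^sub>0\<^sup>\<infinity> g(x) exp(\<theta> x) dx with an atom
   p > 0 and an integrable density g; the integral tends to 0 as |Im \<theta>| \<rightarrow> \<infinity> (Riemann-Lebesgue,
   uniformly in Re \<theta> \<le> 0) and as Re \<theta> \<rightarrow> -\<infinity>, and on the remaining compact rectangle \<phi> is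
   continuous and nonzero. By Liouville's theorem the glued function is constantly 1, so the
   characteristic functions coincide and Levy's uniqueness theorem identifies the laws. *)

lemma norm_exp_mult_of_real_le_1:
  "Re \<theta> \<le> 0 \<Longrightarrow> 0 \<le> x \<Longrightarrow> norm (exp (\<theta> * complex_of_real x)) \<le> 1"
  by (simp add: norm_exp_eq_Re mult_nonpos_nonneg)

lemma mult_exp_neg_le:
  fixes d x :: real
  assumes "0 < d" "0 \<le> x"
  shows "x * exp (- d * x) \<le> 1 / d"
proof -
  have "d * x \<le> exp (d * x)" using exp_ge_add_one_self[of "d * x"] by linarith
  then have "x \<le> exp (d * x) / d" using assms by (simp add: field_simps)
  then have "x * exp (- d * x) \<le> exp (d * x) / d * exp (- d * x)"
    by (intro mult_right_mono) auto
  also have "\<dots> = 1 / d" by (simp add: exp_minus field_simps)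
  finally show ?thesis .
qed

lemma power2_mult_exp_neg_le:
  fixes d x :: real
  assumes "0 < d" "0 \<le> x"
  shows "x\<^sup>2 * exp (- d * x) \<le> 2 / d\<^sup>2"
proof -
  have "1 + d * x + (d * x)\<^sup>2 / 2 \<le> exp (d * x)"
    using assms by (intro exp_lower_Taylor_quadratic) auto
  then have "(d * x)\<^sup>2 / 2 \<le> exp (d * x)" using assms by (smt (verit) mult_nonneg_nonneg)
  then have "d\<^sup>2 * x\<^sup>2 \<le> 2 * exp (d * x)" by (simp add: power_mult_distrib)
  then have "x\<^sup>2 \<le> 2 * exp (d * x) / d\<^sup>2" using assms by (simp add: field_simps)
  then have "x\<^sup>2 * exp (- d * x) \<le> 2 * exp (d * x) / d\<^sup>2 * exp (- d * x)"
    by (intro mult_right_mono) auto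
  also have "\<dots> = 2 / d\<^sup>2" by (simp add: exp_minus field_simps)
  finally show ?thesis .
qed

lemma norm_exp_difference_quotient_le:
  fixes h :: complex and x :: real
  assumes "h \<noteq> 0" "0 \<le> x"
  shows "norm ((exp (h * x) - 1) / h - x) \<le> norm h * x\<^sup>2 * exp (norm h * x)"
proof -
  have "norm (exp (h * x) - (\<Sum>i\<le>1. (h * x) ^ i / fact i)) \<le> exp (norm (h * x)) * norm (h * x) ^ 2 / fact 1"
    using Taylor_exp_field[of "h * x" 1] by (simp add: power2_eq_square)
  then have "norm (exp (h * x) - (1 + h * x)) \<le> exp (norm h * x) * (norm h * x)\<^sup>2"
    using assms(2) by (simp add: norm_mult)
  then have "norm ((exp (h * x) - (1 + h * x)) / h) \<le> exp (norm h * x) * (norm h * x)\<^sup>2 / norm h"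
    by (simp add: norm_divide divide_right_mono)
  also have "\<dots> = norm h * x\<^sup>2 * exp (norm h * x)"
    using assms(1) by (simp add: power2_eq_square)
  also have "(exp (h * x) - (1 + h * x)) / h = (exp (h * x) - 1) / h - x"
    using assms(1) by (simp add: field_simps)
  finally show ?thesis .
qed

lemma (in prob_space) norm_integral_le_const_AE:
  fixes f :: "'a \<Rightarrow> 'b::{banach,second_countable_topology}"
  assumes "f \<in> borel_measurable M" "AE x in M. norm (f x) \<le> C"
  shows "norm (integral\<^sup>L M f) \<le> C"
proof -
  have "integrable M f" using integrable_const_bound[OF assms(2,1)] .
  then have "(\<integral>x. norm (f x) \<partial>M) \<le> C"
    using assms(2) by (intro integral_le_const) auto
  then show ?thesis using integral_norm_bound[of M f] by linarith
qed

section \<open>A Riemann-Lebesgue lemma on the half-line\<close>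

definition left_vertical_infinity :: "complex filter" where
  "left_vertical_infinity = inf (filtercomap (\<lambda>\<theta>. \<bar>Im \<theta>\<bar>) at_top) (principal {\<theta>. Re \<theta> \<le> 0})"

lemma eventually_left_vertical_infinity:
  "eventually P left_vertical_infinity \<longleftrightarrow> (\<exists>T. \<forall>\<theta>. Re \<theta> \<le> 0 \<longrightarrow> T \<le> \<bar>Im \<theta>\<bar> \<longrightarrow> P \<theta>)"
  unfolding left_vertical_infinity_def eventually_inf_principal eventually_filtercomap_at_top_linorder
  by blast

lemma eventually_Re_nonpos_left_vertical_infinity:
  "eventually (\<lambda>\<theta>. Re \<theta> \<le> 0) left_vertical_infinity"
  by (auto simp: eventually_left_vertical_infinity)

lemma filterlim_abs_Im_left_vertical_infinity:
  "filterlim (\<lambda>\<theta>. \<bar>Im \<theta>\<bar>) at_top left_vertical_infinity"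
  unfolding left_vertical_infinity_def by (rule filterlim_mono[OF filterlim_filtercomap]) auto

definition half_line_transform :: "(real \<Rightarrow> real) \<Rightarrow> complex \<Rightarrow> complex" where
  "half_line_transform g \<theta> =
     (CLINT x|lborel. complex_of_real (indicator {0..} x * g x) * exp (\<theta> * complex_of_real x))"

lemma norm_half_line_integrand_le:
  assumes "Re \<theta> \<le> 0"
  shows "norm (complex_of_real (indicator {0..} x * g x) * exp (\<theta> * complex_of_real x))
     \<le> indicator {0..} x * \<bar>g x\<bar>"
proof (cases "0 \<le> x")
  case True
  then show ?thesis
    using norm_exp_mult_of_real_le_1[OF assms True] by (simp add: norm_mult mult_left_le)
qed simp

lemma integrable_half_line_integrand:
  assumes "integrable lborel g" "Re \<theta> \<le> 0"
  shows "integrable lborel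
    (\<lambda>x. complex_of_real (indicator {0..} x * g x) * exp (\<theta> * complex_of_real x))"
proof (rule Bochner_Integration.integrable_bound)
  show "integrable lborel (\<lambda>x. indicator {0..} x * \<bar>g x\<bar>)"
    using integrable_mult_indicator[of "{0..}" lborel "\<lambda>x. \<bar>g x\<bar>"] assms(1) by simp
  show "AE x in lborel. norm (complex_of_real (indicator {0..} x * g x) * exp (\<theta> * complex_of_real x))
     \<le> norm (indicator {0..} x * \<bar>g x\<bar>)"
    using norm_half_line_integrand_le[OF assms(2)] by (auto intro!: AE_I2 order_trans[OF _ abs_ge_self])
qed (use assms(1) in measurable)

lemma norm_half_line_transform_le:
  assumes "integrable lborel g" "Re \<theta> \<le> 0"
  shows "norm (half_line_transform g \<theta>) \<le> (\<integral>x. indicator {0..} x * \<bar>g x\<bar> \<partial>lborel)"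
  unfolding half_line_transform_def
proof (rule Bochner_Integration.integral_norm_bound_integral)
  show "integrable lborel (\<lambda>x. indicator {0..} x * \<bar>g x\<bar>)"
    using integrable_mult_indicator[of "{0..}" lborel "\<lambda>x. \<bar>g x\<bar>"] assms(1) by simp
qed (use integrable_half_line_integrand[OF assms] norm_half_line_integrand_le[OF assms(2)] in auto)

lemma half_line_transform_add:
  assumes "integrable lborel g" "integrable lborel h" "Re \<theta> \<le> 0"
  shows "half_line_transform (\<lambda>x. g x + h x) \<theta> = half_line_transform g \<theta> + half_line_transform h \<theta>"
  unfolding half_line_transform_def
  by (subst Bochner_Integration.integral_add[OF integrable_half_line_integrand[OF assms(1,3)]
        integrable_half_line_integrand[OF assms(2,3)], symmetric]) (simp add: algebra_simps)

lemma half_line_transform_diff: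
  assumes "integrable lborel g" "integrable lborel h" "Re \<theta> \<le> 0"
  shows "half_line_transform (\<lambda>x. g x - h x) \<theta> = half_line_transform g \<theta> - half_line_transform h \<theta>"
  unfolding half_line_transform_def
  by (subst Bochner_Integration.integral_diff[OF integrable_half_line_integrand[OF assms(1,3)]
        integrable_half_line_integrand[OF assms(2,3)], symmetric]) (simp add: algebra_simps)

lemma half_line_transform_sum:
  assumes "\<And>i. i \<in> I \<Longrightarrow> integrable lborel (f i)" "Re \<theta> \<le> 0"
  shows "half_line_transform (\<lambda>x. \<Sum>i\<in>I. f i x) \<theta> = (\<Sum>i\<in>I. half_line_transform (f i) \<theta>)"
  unfolding half_line_transform_def
  using Bochner_Integration.integral_sum[OF integrable_half_line_integrand[OF assms(1) assms(2)]]
  by (simp add: sum_distrib_left sum_distrib_right)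

lemma half_line_transform_cmult:
  "half_line_transform (\<lambda>x. c * g x) \<theta> = complex_of_real c * half_line_transform g \<theta>"
  unfolding half_line_transform_def by (subst integral_mult_right_zero[symmetric]) (simp add: algebra_simps)

lemma norm_half_line_transform_interval_le:
  assumes "Re \<theta> \<le> 0" "Im \<theta> \<noteq> 0"
  shows "norm (half_line_transform (indicator {c..d}) \<theta>) \<le> 2 / \<bar>Im \<theta>\<bar>"
proof -
  define a where "a = max 0 c"
  have "\<theta> \<noteq> 0" using assms(2) by auto
  have "half_line_transform (indicator {c..d}) \<theta> = (CLBINT x:{a..d}. exp (\<theta> * complex_of_real x))"
    unfolding half_line_transform_def set_lebesgue_integral_def
    by (intro Bochner_Integration.integral_cong) (auto simp: a_def scaleR_conv_of_real indicator_def)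
  also have "\<dots> = (if a \<le> d then (exp (\<theta> * d) - exp (\<theta> * a)) / \<theta> else 0)"
  proof (cases "a \<le> d")
    case True
    have "(CLBINT x:{a..d}. exp (\<theta> * complex_of_real x)) = (CLBINT x=a..d. exp (\<theta> * complex_of_real x))"
      using True by (simp add: interval_integral_Icc)
    also have "\<dots> = exp (\<theta> * d) / \<theta> - exp (\<theta> * a) / \<theta>"
    proof (rule interval_integral_FTC_finite)
      fix x :: real
      have "((\<lambda>z. exp (\<theta> * z) / \<theta>) has_field_derivative exp (\<theta> * complex_of_real x))
          (at (complex_of_real x))"
        using \<open>\<theta> \<noteq> 0\<close> by (auto intro!: derivative_eq_intros)
      from has_vector_derivative_real_field[OF this]
      show "((\<lambda>x. exp (\<theta> * complex_of_real x) / \<theta>) has_vector_derivative exp (\<theta> * complex_of_real x))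
         (at x within {min a d..max a d})" .
    qed (intro continuous_intros)
    finally show ?thesis using True by (simp add: diff_divide_distrib)
  qed (simp add: set_lebesgue_integral_def)
  also have "norm \<dots> \<le> 2 / norm \<theta>"
  proof (cases "a \<le> d")
    case True
    have "norm (exp (\<theta> * d)) \<le> 1" "norm (exp (\<theta> * a)) \<le> 1"
      using norm_exp_mult_of_real_le_1[OF assms(1)] True by (auto simp: a_def)
    then have "norm (exp (\<theta> * d) - exp (\<theta> * a)) \<le> 2"
      using norm_triangle_ineq4[of "exp (\<theta> * d)" "exp (\<theta> * a)"] by linarith
    then show ?thesis using True by (simp add: norm_divide divide_right_mono)
  qed simp
  also have "\<dots> \<le> 2 / \<bar>Im \<theta>\<bar>"
    using assms(2) abs_Im_le_cmod[of \<theta>] by (intro divide_left_mono mult_pos_pos) auto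
  finally show ?thesis .
qed

lemma tendsto_half_line_transform_interval:
  "(half_line_transform (indicator {c..d}) \<longlongrightarrow> 0) left_vertical_infinity"
proof (rule Lim_null_comparison)
  have "eventually (\<lambda>\<theta>. 1 \<le> \<bar>Im \<theta>\<bar>) left_vertical_infinity"
    using filterlim_abs_Im_left_vertical_infinity by (simp add: filterlim_at_top)
  then show "eventually (\<lambda>\<theta>. norm (half_line_transform (indicator {c..d}) \<theta>) \<le> 2 / \<bar>Im \<theta>\<bar>)
      left_vertical_infinity"
    using eventually_Re_nonpos_left_vertical_infinity
    by eventually_elim (auto intro: norm_half_line_transform_interval_le)
  show "((\<lambda>\<theta>. 2 / \<bar>Im \<theta>\<bar>) \<longlongrightarrow> 0) left_vertical_infinity"
    by (intro tendsto_divide_0[OF tendsto_const] filterlim_at_top_imp_at_infinity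
        filterlim_abs_Im_left_vertical_infinity)
qed

lemma tendsto_half_line_transform_L1_approx:
  fixes s :: "nat \<Rightarrow> real \<Rightarrow> real"
  assumes g: "integrable lborel g" and s: "\<And>i. integrable lborel (s i)"
    and s_tendsto: "\<And>i. (half_line_transform (s i) \<longlongrightarrow> 0) left_vertical_infinity"
    and approx: "(\<lambda>i. \<integral>x. indicator {0..} x * \<bar>s i x - g x\<bar> \<partial>lborel) \<longlonglongrightarrow> 0"
  shows "(half_line_transform g \<longlongrightarrow> 0) left_vertical_infinity"
  unfolding tendsto_iff dist_norm diff_zero
proof (intro allI impI)
  fix e :: real assume "e > 0"
  then obtain i where i: "(\<integral>x. indicator {0..} x * \<bar>s i x - g x\<bar> \<partial>lborel) < e / 2"
    using order_tendstoD(2)[OF approx, of "e / 2"] by (auto simp: eventually_sequentially)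
  have "e / 2 > 0" using \<open>e > 0\<close> by simp
  from tendstoD[OF s_tendsto[of i] this]
  have "eventually (\<lambda>\<theta>. norm (half_line_transform (s i) \<theta>) < e / 2) left_vertical_infinity"
    by (simp add: dist_norm)
  then show "eventually (\<lambda>\<theta>. norm (half_line_transform g \<theta>) < e) left_vertical_infinity"
    using eventually_Re_nonpos_left_vertical_infinity
  proof eventually_elim
    case (elim \<theta>)
    have "half_line_transform g \<theta> = half_line_transform (s i) \<theta> - half_line_transform (\<lambda>x. s i x - g x) \<theta>"
      using half_line_transform_diff[OF s g elim(2)] by simp
    then have "norm (half_line_transform g \<theta>)
        \<le> norm (half_line_transform (s i) \<theta>) + norm (half_line_transform (\<lambda>x. s i x - g x) \<theta>)"
      by (simp add: norm_triangle_ineq4)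
    moreover have "norm (half_line_transform (\<lambda>x. s i x - g x) \<theta>) < e / 2"
      using norm_half_line_transform_le[OF _ elim(2), of "\<lambda>x. s i x - g x"] s g i by simp
    ultimately show ?case using elim(1) by linarith
  qed
qed

lemma tendsto_half_line_transform_dominated:
  fixes s :: "nat \<Rightarrow> real \<Rightarrow> real"
  assumes g: "integrable lborel g" and s: "\<And>i. integrable lborel (s i)"
    and s_tendsto: "\<And>i. (half_line_transform (s i) \<longlongrightarrow> 0) left_vertical_infinity"
    and w: "integrable lborel w"
    and lim: "\<And>x. 0 \<le> x \<Longrightarrow> (\<lambda>i. s i x) \<longlonglongrightarrow> g x"
    and dominated: "\<And>i x. 0 \<le> x \<Longrightarrow> \<bar>s i x - g x\<bar> \<le> w x"
  shows "(half_line_transform g \<longlongrightarrow> 0) left_vertical_infinity"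
proof (rule tendsto_half_line_transform_L1_approx[OF g s s_tendsto])
  have "(\<lambda>i. \<integral>x. indicator {0..} x * \<bar>s i x - g x\<bar> \<partial>lborel) \<longlonglongrightarrow> (\<integral>x. 0 \<partial>(lborel :: real measure))"
  proof (rule integral_dominated_convergence[where w="\<lambda>x. indicator {0..} x * w x"
        and s="\<lambda>i x. indicator {0..} x * \<bar>s i x - g x\<bar>" and f="\<lambda>x. 0"])
    show "integrable lborel (\<lambda>x. indicator {0..} x * w x)"
      using integrable_mult_indicator[of "{0..}" lborel w] w by simp
    show "AE x in lborel. (\<lambda>i. indicator {0..} x * \<bar>s i x - g x\<bar>) \<longlonglongrightarrow> 0"
    proof (rule AE_I2)
      fix x :: real
      show "(\<lambda>i. indicator {0..} x * \<bar>s i x - g x\<bar>) \<longlonglongrightarrow> 0"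
      proof (cases "0 \<le> x")
        case True
        have "(\<lambda>i. \<bar>s i x - g x\<bar>) \<longlonglongrightarrow> \<bar>g x - g x\<bar>"
          by (intro tendsto_intros lim True)
        then show ?thesis using True by simp
      qed simp
    qed
    show "AE x in lborel. norm (indicator {0..} x * \<bar>s i x - g x\<bar>) \<le> indicator {0..} x * w x" for i
      using dominated by (intro AE_I2) (auto simp: indicator_def)
  qed (use s g in auto)
  then show "(\<lambda>i. \<integral>x. indicator {0..} x * \<bar>s i x - g x\<bar> \<partial>lborel) \<longlonglongrightarrow> 0" by simp
qed

lemma integrable_indicator_inter_interval:
  assumes "A \<in> sets borel"
  shows "integrable lborel (indicator (A \<inter> {a..b}) :: real \<Rightarrow> real)"
proof (rule integrable_real_indicator)
  have "emeasure lborel (A \<inter> {a..b}) \<le> emeasure lborel {a..b}"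
    by (intro emeasure_mono) auto
  also have "\<dots> < \<infinity>" by (simp add: emeasure_lborel_Icc_eq)
  finally show "emeasure lborel (A \<inter> {a..b}) < \<infinity>" .
qed (use assms in auto)

lemma tendsto_half_line_transform_indicator_disjoint_UN:
  fixes f :: "nat \<Rightarrow> real set"
  assumes "disjoint_family f" "\<And>i. f i \<in> sets borel"
    and "\<And>i. (half_line_transform (indicator (f i \<inter> {0..real n})) \<longlongrightarrow> 0) left_vertical_infinity"
  shows "(half_line_transform (indicator (\<Union> (range f) \<inter> {0..real n})) \<longlongrightarrow> 0) left_vertical_infinity"
proof -
  define W where "W = {0..real n}"
  define s where "s k = (\<lambda>x. \<Sum>i<k. indicator (f i \<inter> W) x :: real)" for k
  have integrable_f: "integrable lborel (indicator (f i \<inter> W) :: real \<Rightarrow> real)" for i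
    unfolding W_def using assms(2) by (rule integrable_indicator_inter_interval)
  have s_indicator: "s k = indicator (\<Union>i<k. f i \<inter> W)" for k
  proof -
    have "disjoint_family_on (\<lambda>i. f i \<inter> W) {..<k}"
      using assms(1) by (auto simp: disjoint_family_on_def)
    then show ?thesis
      unfolding s_def fun_eq_iff by (intro allI indicator_UN_disjoint[OF finite_lessThan, symmetric])
  qed
  have union_eq: "(\<Union>i. f i \<inter> W) = \<Union> (range f) \<inter> {0..real n}"
    unfolding W_def by blast
  show ?thesis
  proof (rule tendsto_half_line_transform_dominated[where s=s and w="indicator W"])
    show "integrable lborel (indicator (\<Union> (range f) \<inter> {0..real n}) :: real \<Rightarrow> real)"
      using assms(2) by (intro integrable_indicator_inter_interval) auto
    show "integrable lborel (s k)" for k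
      unfolding s_def using integrable_f by (rule Bochner_Integration.integrable_sum)
    show "(half_line_transform (s k) \<longlongrightarrow> 0) left_vertical_infinity" for k
    proof -
      have "((\<lambda>\<theta>. \<Sum>i<k. half_line_transform (indicator (f i \<inter> W)) \<theta>) \<longlongrightarrow> 0) left_vertical_infinity"
        using tendsto_null_sum[of "{..<k}", OF assms(3)] unfolding W_def by simp
      moreover have "eventually (\<lambda>\<theta>. (\<Sum>i<k. half_line_transform (indicator (f i \<inter> W)) \<theta>)
          = half_line_transform (s k) \<theta>) left_vertical_infinity"
        using eventually_Re_nonpos_left_vertical_infinity
        by eventually_elim (simp add: s_def half_line_transform_sum integrable_f)
      ultimately show ?thesis by (rule Lim_transform_eventually)
    qed
    show "integrable lborel (indicator W :: real \<Rightarrow> real)"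
      unfolding W_def using integrable_indicator_inter_interval[of UNIV] by simp
    fix x :: real
    show "(\<lambda>k. s k x) \<longlonglongrightarrow> indicator (\<Union> (range f) \<inter> {0..real n}) x"
      unfolding s_indicator union_eq[symmetric] by (rule LIMSEQ_indicator_UN)
    show "\<bar>s k x - indicator (\<Union> (range f) \<inter> {0..real n}) x\<bar> \<le> indicator W x" for k
      unfolding s_indicator union_eq[symmetric] by (simp add: indicator_def)
  qed
qed

(* Truncation to [0,n] keeps the measure finite, so that the Dynkin argument can pass to
   complements. *)
lemma tendsto_half_line_transform_indicator_borel:
  assumes "A \<in> sets borel"
  shows "(half_line_transform (indicator (A \<inter> {0..real n})) \<longlongrightarrow> 0) left_vertical_infinity"
  using assms
proof (induction arbitrary: n rule: borel_set_induct)
  case empty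
  then show ?case by (simp add: half_line_transform_def)
next
  case (interval a b)
  have "{a..b} \<inter> {0..real n} = {max a 0..min b (real n)}" by auto
  then show ?case using tendsto_half_line_transform_interval by simp
next
  case (compl A)
  have complement: "indicator (- A \<inter> {0..real n}) = (\<lambda>x. indicator {0..real n} x - indicator (A \<inter> {0..real n}) x :: real)"
    by (auto simp: fun_eq_iff indicator_def)
  have "((\<lambda>\<theta>. half_line_transform (indicator {0..real n}) \<theta> - half_line_transform (indicator (A \<inter> {0..real n})) \<theta>)
      \<longlongrightarrow> 0 - 0) left_vertical_infinity"
    by (intro tendsto_diff tendsto_half_line_transform_interval compl.IH)
  moreover have "eventually (\<lambda>\<theta>. half_line_transform (indicator {0..real n}) \<theta>
      - half_line_transform (indicator (A \<inter> {0..real n})) \<theta>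
      = half_line_transform (indicator (- A \<inter> {0..real n})) \<theta>) left_vertical_infinity"
    using eventually_Re_nonpos_left_vertical_infinity
  proof eventually_elim
    case (elim \<theta>)
    show ?case
      unfolding complement
      using integrable_indicator_inter_interval[OF compl.hyps] integrable_indicator_inter_interval[of UNIV]
      by (simp add: half_line_transform_diff elim)
  qed
  ultimately show ?case by (simp add: Lim_transform_eventually)
next
  case (union f)
  then show ?case by (rule tendsto_half_line_transform_indicator_disjoint_UN)
qed

lemma tendsto_half_line_transform_indicator:
  assumes "A \<in> sets borel" "emeasure lborel A < \<infinity>"
  shows "(half_line_transform (indicator A) \<longlongrightarrow> 0) left_vertical_infinity"
proof (rule tendsto_half_line_transform_dominated[where s="\<lambda>n. indicator (A \<inter> {0..real n})" and w="indicator A"])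
  show "integrable lborel (indicator (A \<inter> {0..real n}) :: real \<Rightarrow> real)" for n
    using assms(1) by (rule integrable_indicator_inter_interval)
  show "(half_line_transform (indicator (A \<inter> {0..real n})) \<longlongrightarrow> 0) left_vertical_infinity" for n
    using assms(1) by (rule tendsto_half_line_transform_indicator_borel)
  fix x :: real assume "0 \<le> x"
  moreover obtain N :: nat where "x \<le> real N" using real_arch_simple by blast
  ultimately have "eventually (\<lambda>n. indicator (A \<inter> {0..real n}) x = (indicator A x :: real)) sequentially"
    by (auto simp: eventually_sequentially indicator_def intro!: exI[of _ N])
  then show "(\<lambda>n. indicator (A \<inter> {0..real n}) x :: real) \<longlonglongrightarrow> indicator A x"
    by (rule tendsto_eventually)
  show "\<bar>indicator (A \<inter> {0..real n}) x - indicator A x\<bar> \<le> (indicator A x :: real)" for n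
    by (auto simp: indicator_def)
qed (use assms in \<open>auto intro: integrable_real_indicator\<close>)

theorem Riemann_Lebesgue_half_line_transform:
  assumes "integrable lborel g"
  shows "(half_line_transform g \<longlongrightarrow> 0) left_vertical_infinity"
  using assms
proof (induction rule: integrable_induct)
  case (base A c)
  then have "(half_line_transform (indicator A) \<longlongrightarrow> 0) left_vertical_infinity"
    by (intro tendsto_half_line_transform_indicator) auto
  then have "((\<lambda>\<theta>. complex_of_real c * half_line_transform (indicator A) \<theta>) \<longlongrightarrow> 0) left_vertical_infinity"
    using tendsto_mult_right_zero by blast
  then show ?case
    by (simp add: half_line_transform_cmult[symmetric] mult.commute)
next
  case (add f g)
  have "((\<lambda>\<theta>. half_line_transform f \<theta> + half_line_transform g \<theta>) \<longlongrightarrow> 0 + 0) left_vertical_infinity"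
    using add.IH by (intro tendsto_add)
  moreover have "eventually (\<lambda>\<theta>. half_line_transform f \<theta> + half_line_transform g \<theta>
      = half_line_transform (\<lambda>x. f x + g x) \<theta>) left_vertical_infinity"
    using eventually_Re_nonpos_left_vertical_infinity
    by eventually_elim (simp add: half_line_transform_add add.hyps)
  ultimately show ?case by (simp add: Lim_transform_eventually)
next
  case (lim f s)
  show ?case
  proof (rule tendsto_half_line_transform_dominated[where s=s and w="\<lambda>x. 3 * \<bar>f x\<bar>"])
    fix i x
    have "\<bar>s i x\<bar> \<le> 2 * \<bar>f x\<bar>" using lim by simp
    then show "\<bar>s i x - f x\<bar> \<le> 3 * \<bar>f x\<bar>" by linarith
  qed (use lim in auto)
qed

lemma
  fixes g :: "real \<Rightarrow> real"
  assumes g: "integrable lborel g"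
  shows integrable_damped_abs: "integrable lborel (\<lambda>x. indicator {0..} x * \<bar>g x\<bar> * exp (- x) ^ n)"
    and tendsto_integral_damped_abs:
      "(\<lambda>n. \<integral>x. indicator {0..} x * \<bar>g x\<bar> * exp (- x) ^ n \<partial>lborel) \<longlonglongrightarrow> 0"
proof -
  have damped_le: "norm (indicator {0..} x * \<bar>g x\<bar> * exp (- x) ^ n) \<le> \<bar>g x\<bar>" for n x
  proof (cases "0 \<le> x")
    case True
    then have "exp (- x) ^ n \<le> 1" by (intro power_le_one) auto
    then show ?thesis using True by (simp add: abs_mult mult_left_le)
  qed simp
  show "integrable lborel (\<lambda>x. indicator {0..} x * \<bar>g x\<bar> * exp (- x) ^ n)"
    by (rule Bochner_Integration.integrable_bound[OF integrable_abs[OF g]])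
      (use damped_le borel_measurable_integrable[OF g] in auto)
  have "(\<lambda>n. \<integral>x. indicator {0..} x * \<bar>g x\<bar> * exp (- x) ^ n \<partial>lborel) \<longlonglongrightarrow> (\<integral>x. 0 \<partial>(lborel :: real measure))"
  proof (rule integral_dominated_convergence[where w="\<lambda>x. \<bar>g x\<bar>"])
    show "AE x in lborel. (\<lambda>n. indicator {0..} x * \<bar>g x\<bar> * exp (- x) ^ n) \<longlonglongrightarrow> 0"
      using AE_lborel_singleton[of 0]
    proof eventually_elim
      case (elim x)
      show ?case
      proof (cases "0 < x")
        case True
        then have "(\<lambda>n. exp (- x) ^ n) \<longlonglongrightarrow> 0" by (intro LIMSEQ_power_zero) auto
        then show ?thesis by (rule tendsto_mult_right_zero)
      qed (use elim in simp)
    qed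
  qed (use g damped_le borel_measurable_integrable[OF g] in auto)
  then show "(\<lambda>n. \<integral>x. indicator {0..} x * \<bar>g x\<bar> * exp (- x) ^ n \<partial>lborel) \<longlonglongrightarrow> 0"
    by simp
qed

lemma tendsto_half_line_transform_Re_at_bot:
  assumes g: "integrable lborel g"
  shows "(half_line_transform g \<longlongrightarrow> 0) (filtercomap Re at_bot)"
  unfolding tendsto_iff dist_norm diff_zero
proof (intro allI impI)
  fix e :: real assume "e > 0"
  then obtain n where n: "(\<integral>x. indicator {0..} x * \<bar>g x\<bar> * exp (- x) ^ n \<partial>lborel) < e"
    using order_tendstoD(2)[OF tendsto_integral_damped_abs[OF g]] by (auto simp: eventually_sequentially)
  have "eventually (\<lambda>\<theta>. Re \<theta> \<le> - real n) (filtercomap Re at_bot)"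
    by (auto simp: eventually_filtercomap_at_bot_linorder)
  then show "eventually (\<lambda>\<theta>. norm (half_line_transform g \<theta>) < e) (filtercomap Re at_bot)"
  proof eventually_elim
    case (elim \<theta>)
    then have "Re \<theta> \<le> 0" using of_nat_0_le_iff[of n] by linarith
    have "norm (half_line_transform g \<theta>)
        \<le> (\<integral>x. norm (complex_of_real (indicator {0..} x * g x) * exp (\<theta> * complex_of_real x)) \<partial>lborel)"
      unfolding half_line_transform_def by (rule integral_norm_bound)
    also have "\<dots> \<le> (\<integral>x. indicator {0..} x * \<bar>g x\<bar> * exp (- x) ^ n \<partial>lborel)"
    proof (rule integral_mono)
      show "integrable lborel (\<lambda>x. norm (complex_of_real (indicator {0..} x * g x) * exp (\<theta> * complex_of_real x)))"
        using integrable_half_line_integrand[OF g \<open>Re \<theta> \<le> 0\<close>] by (rule integrable_norm)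
      show "integrable lborel (\<lambda>x. indicator {0..} x * \<bar>g x\<bar> * exp (- x) ^ n)"
        using g by (rule integrable_damped_abs)
      fix x :: real
      have "Re \<theta> * x \<le> - real n * x" if "0 \<le> x" using elim that by (intro mult_right_mono) auto
      then show "norm (complex_of_real (indicator {0..} x * g x) * exp (\<theta> * complex_of_real x))
          \<le> indicator {0..} x * \<bar>g x\<bar> * exp (- x) ^ n"
        by (auto simp: indicator_def norm_mult norm_exp_eq_Re abs_mult exp_of_nat_mult[symmetric]
            intro!: mult_left_mono)
    qed
    finally show ?case using n by simp
  qed
qed

section \<open>Transforms of laws on the half-line\<close>

abbreviation law_transform :: "real measure \<Rightarrow> complex \<Rightarrow> complex" where
  "law_transform \<mu> \<equiv> transform \<mu> (\<lambda>x. x)"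

lemma char_eq_law_transform: "char \<mu> t = law_transform \<mu> (\<i> * complex_of_real t)"
  unfolding char_def transform_def by (simp add: mult.assoc)

locale nonneg_real_distribution = real_distribution +
  assumes AE_nonneg: "AE x in M. 0 \<le> x"
begin

lemma AE_norm_exp_le_1: "Re \<theta> \<le> 0 \<Longrightarrow> AE x in M. norm (exp (\<theta> * complex_of_real x)) \<le> 1"
  using AE_nonneg by eventually_elim (rule norm_exp_mult_of_real_le_1)

lemma integrable_exp: "Re \<theta> \<le> 0 \<Longrightarrow> integrable M (\<lambda>x. exp (\<theta> * complex_of_real x))"
  by (rule integrable_const_bound[OF AE_norm_exp_le_1]) auto

lemma norm_law_transform_le_1: "Re \<theta> \<le> 0 \<Longrightarrow> norm (law_transform M \<theta>) \<le> 1"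
  unfolding transform_def by (rule norm_integral_le_const_AE[OF _ AE_norm_exp_le_1]) auto

lemma law_transform_0: "law_transform M 0 = 1"
  unfolding transform_def by (simp del: space_eq_univ add: prob_space)

lemma continuous_on_law_transform: "continuous_on {\<theta>. Re \<theta> \<le> 0} (law_transform M)"
proof (rule continuous_on_sequentiallyI)
  fix u :: "nat \<Rightarrow> complex" and a
  assume u: "\<forall>n. u n \<in> {\<theta>. Re \<theta> \<le> 0}" "a \<in> {\<theta>. Re \<theta> \<le> 0}" "u \<longlonglongrightarrow> a"
  show "(\<lambda>n. law_transform M (u n)) \<longlonglongrightarrow> law_transform M a"
    unfolding transform_def
  proof (rule integral_dominated_convergence[where w="\<lambda>_. 1"])
    show "AE x in M. (\<lambda>n. exp (u n * complex_of_real x)) \<longlonglongrightarrow> exp (a * complex_of_real x)"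
      using u(3) by (intro AE_I2 tendsto_intros) auto
    show "AE x in M. norm (exp (u n * complex_of_real x)) \<le> 1" for n
      using AE_norm_exp_le_1[of "u n"] u(1) by auto
  qed auto
qed

lemma integrable_of_real_mult_exp:
  assumes "Re \<theta> < 0"
  shows "integrable M (\<lambda>x. complex_of_real x * exp (\<theta> * x))"
proof (rule integrable_const_bound[where B="1 / - Re \<theta>"])
  show "AE x in M. norm (complex_of_real x * exp (\<theta> * x)) \<le> 1 / - Re \<theta>"
    using AE_nonneg
  proof eventually_elim
    case (elim x)
    have "norm (complex_of_real x * exp (\<theta> * x)) = x * exp (- (- Re \<theta>) * x)"
      using elim by (simp add: norm_mult norm_exp_eq_Re)
    also have "\<dots> \<le> 1 / - Re \<theta>" using assms elim by (intro mult_exp_neg_le) auto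
    finally show ?case .
  qed
qed auto

lemma norm_law_transform_difference_quotient_le:
  assumes "h \<noteq> 0" "0 < d" "Re \<theta> + norm h \<le> - d"
  shows "norm ((law_transform M (\<theta> + h) - law_transform M \<theta>) / h - (CLINT x|M. x * exp (\<theta> * x)))
    \<le> 2 / d\<^sup>2 * norm h"
proof -
  have "Re \<theta> < 0" "Re (\<theta> + h) \<le> 0"
    using assms abs_Re_le_cmod[of h] norm_ge_zero[of h] by auto
  have "(law_transform M (\<theta> + h) - law_transform M \<theta>) / h - (CLINT x|M. x * exp (\<theta> * x)) =
      (CLINT x|M. (exp ((\<theta> + h) * x) - exp (\<theta> * x)) / h - x * exp (\<theta> * x))"
    unfolding transform_def
    using integrable_exp[OF \<open>Re (\<theta> + h) \<le> 0\<close>] integrable_exp[of \<theta>] \<open>Re \<theta> < 0\<close>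
      integrable_of_real_mult_exp[OF \<open>Re \<theta> < 0\<close>]
    by (simp add: integral_divide_zero)
  also have "\<dots> = (CLINT x|M. exp (\<theta> * x) * ((exp (h * x) - 1) / h - x))"
    using assms(1) by (intro Bochner_Integration.integral_cong) (simp_all add: field_simps flip: exp_add)
  also have "norm \<dots> \<le> 2 / d\<^sup>2 * norm h"
  proof (rule norm_integral_le_const_AE)
    show "AE x in M. norm (exp (\<theta> * x) * ((exp (h * x) - 1) / h - x)) \<le> 2 / d\<^sup>2 * norm h"
      using AE_nonneg
    proof eventually_elim
      case (elim x)
      have "norm (exp (\<theta> * x) * ((exp (h * x) - 1) / h - x))
          \<le> exp (Re \<theta> * x) * (norm h * x\<^sup>2 * exp (norm h * x))"
        using norm_exp_difference_quotient_le[OF assms(1) elim]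
        by (simp add: norm_mult norm_exp_eq_Re)
      also have "\<dots> = norm h * (x\<^sup>2 * exp ((Re \<theta> + norm h) * x))"
        by (simp add: algebra_simps exp_add)
      also have "\<dots> \<le> norm h * (x\<^sup>2 * exp (- d * x))"
      proof -
        have "(Re \<theta> + norm h) * x \<le> - d * x"
          using assms(3) elim by (intro mult_right_mono) auto
        then show ?thesis by (intro mult_left_mono) auto
      qed
      also have "\<dots> \<le> norm h * (2 / d\<^sup>2)"
        using assms(2) elim by (intro mult_left_mono power2_mult_exp_neg_le) auto
      finally show ?case by (simp add: mult.commute)
    qed
  qed simp
  finally show ?thesis .
qed

lemma has_field_derivative_law_transform:
  assumes "Re \<theta> < 0"
  shows "(law_transform M has_field_derivative (CLINT x|M. x * exp (\<theta> * x))) (at \<theta>)"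
proof -
  define d where "d = - Re \<theta> / 2"
  define D where "D = (CLINT x|M. x * exp (\<theta> * x))"
  have "0 < d" using assms by (simp add: d_def)
  have "((\<lambda>y. (law_transform M y - law_transform M \<theta>) / (y - \<theta>) - D) \<longlongrightarrow> 0) (at \<theta>)"
  proof (rule Lim_null_comparison)
    have "norm ((law_transform M y - law_transform M \<theta>) / (y - \<theta>) - D) \<le> 2 / d\<^sup>2 * norm (y - \<theta>)"
      if "y \<noteq> \<theta>" "norm (y - \<theta>) < d" for y
      using norm_law_transform_difference_quotient_le[of "y - \<theta>" d \<theta>] that \<open>0 < d\<close>
      by (simp add: D_def d_def)
    then show "eventually (\<lambda>y. norm ((law_transform M y - law_transform M \<theta>) / (y - \<theta>) - D)
        \<le> 2 / d\<^sup>2 * norm (y - \<theta>)) (at \<theta>)"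
      unfolding eventually_at using \<open>0 < d\<close> by (auto simp: dist_norm)
    have "((\<lambda>y. 2 / d\<^sup>2 * norm (y - \<theta>)) \<longlongrightarrow> 2 / d\<^sup>2 * norm (\<theta> - \<theta>)) (at \<theta>)"
      by (intro tendsto_intros)
    then show "((\<lambda>y. 2 / d\<^sup>2 * norm (y - \<theta>)) \<longlongrightarrow> 0) (at \<theta>)" by simp
  qed
  then show ?thesis
    unfolding has_field_derivative_iff D_def[symmetric] by (simp add: LIM_zero_iff)
qed

lemma holomorphic_on_law_transform: "law_transform M holomorphic_on {\<theta>. Re \<theta> < 0}"
  unfolding holomorphic_on_def field_differentiable_def
  using has_field_derivative_law_transform has_field_derivative_at_within by blast

end

section \<open>Laws with an atom at 0 and a density\<close>

lemma (in real_distribution) density_indicator_pos_eq_density_lborel: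
  assumes [measurable]: "f \<in> borel_measurable borel"
    and f_density: "\<And>A. A \<in> sets borel \<Longrightarrow> emeasure M (A \<inter> {0<..}) = (\<integral>\<^sup>+ x \<in> A \<inter> {0<..}. f x \<partial>lborel)"
  shows "density M (\<lambda>x. ennreal (indicator {0<..} x)) = density lborel (\<lambda>x. f x * indicator {0<..} x)"
proof (rule measure_eqI)
  fix A assume "A \<in> sets (density M (\<lambda>x. ennreal (indicator {0<..} x)))"
  then have A [measurable]: "A \<in> sets borel" by simp
  have "emeasure (density M (\<lambda>x. ennreal (indicator {0<..} x))) A
      = (\<integral>\<^sup>+ x. ennreal (indicator {0<..} x) * indicator A x \<partial>M)"
    by (rule emeasure_density) auto
  also have "\<dots> = (\<integral>\<^sup>+ x. indicator (A \<inter> {0<..}) x \<partial>M)"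
    by (rule nn_integral_cong) (auto split: split_indicator)
  also have "\<dots> = emeasure M (A \<inter> {0<..})"
    by (intro nn_integral_indicator) simp
  also have "\<dots> = emeasure (density lborel (\<lambda>x. f x * indicator {0<..} x)) A"
    using f_density[OF A] by (subst emeasure_density) (auto intro!: nn_integral_cong split: split_indicator)
  finally show "emeasure (density M (\<lambda>x. ennreal (indicator {0<..} x))) A
      = emeasure (density lborel (\<lambda>x. f x * indicator {0<..} x)) A" .
qed simp

lemma (in real_distribution) atom0_density_law_density_on_half_line:
  assumes "atom0_density_law M"
  obtains g where "integrable lborel g" "\<And>x. 0 \<le> g x" "\<And>x. x \<le> 0 \<Longrightarrow> g x = 0"
    "density M (\<lambda>x. ennreal (indicator {0<..} x)) = density lborel (\<lambda>x. ennreal (g x))"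
proof -
  from assms obtain f where f [measurable]: "f \<in> borel_measurable borel"
    and f_density: "\<And>A. A \<in> sets borel \<Longrightarrow> emeasure M (A \<inter> {0<..}) = (\<integral>\<^sup>+ x \<in> A \<inter> {0<..}. f x \<partial>lborel)"
    unfolding atom0_density_law_def by blast
  define g where "g x = enn2real (f x * indicator {0<..} x)" for x
  have [measurable]: "g \<in> borel_measurable lborel" unfolding g_def by measurable
  have "(\<integral>\<^sup>+ x. f x * indicator {0<..} x \<partial>lborel) = emeasure M (UNIV \<inter> {0<..})"
    using f_density[of UNIV] by simp
  also have "\<dots> < \<infinity>" by (simp add: emeasure_eq_measure)
  finally have finite: "(\<integral>\<^sup>+ x. f x * indicator {0<..} x \<partial>lborel) < \<infinity>" .
  have AE_g: "AE x in lborel. ennreal (g x) = f x * indicator {0<..} x"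
  proof -
    have "AE x in lborel. f x * indicator {0<..} x \<noteq> \<infinity>"
      using finite by (intro nn_integral_PInf_AE) auto
    then show ?thesis by eventually_elim (simp add: g_def ennreal_enn2real_if)
  qed
  show thesis
  proof
    show "integrable lborel g"
      unfolding integrable_iff_bounded
    proof
      have "(\<integral>\<^sup>+ x. ennreal (norm (g x)) \<partial>lborel) = (\<integral>\<^sup>+ x. f x * indicator {0<..} x \<partial>lborel)"
        using AE_g by (intro nn_integral_cong_AE) (auto simp: g_def)
      then show "(\<integral>\<^sup>+ x. ennreal (norm (g x)) \<partial>lborel) < \<infinity>" using finite by simp
    qed simp
    show "0 \<le> g x" "x \<le> 0 \<Longrightarrow> g x = 0" for x by (simp_all add: g_def)
    show "density M (\<lambda>x. ennreal (indicator {0<..} x)) = density lborel (\<lambda>x. ennreal (g x))"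
    proof -
      have "density M (\<lambda>x. ennreal (indicator {0<..} x)) = density lborel (\<lambda>x. f x * indicator {0<..} x)"
        using f f_density by (rule density_indicator_pos_eq_density_lborel)
      also have "\<dots> = density lborel (\<lambda>x. ennreal (g x))"
        using AE_g by (intro density_cong) auto
      finally show ?thesis .
    qed
  qed
qed

lemma (in nonneg_real_distribution) law_transform_eq_atom_plus_half_line_transform:
  assumes "atom0_density_law M"
  obtains p g where "0 < p" "integrable lborel g"
    "\<And>\<theta>. Re \<theta> \<le> 0 \<Longrightarrow> law_transform M \<theta> = complex_of_real p + half_line_transform g \<theta>"
proof -
  obtain g where g: "integrable lborel g" "\<And>x. 0 \<le> g x" "\<And>x. x \<le> 0 \<Longrightarrow> g x = 0"
    and g_density: "density M (\<lambda>x. ennreal (indicator {0<..} x)) = density lborel (\<lambda>x. ennreal (g x))"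
    using atom0_density_law_density_on_half_line[OF assms] by blast
  define p where "p = measure M {0}"
  have "0 < p"
    using assms by (simp add: atom0_density_law_def p_def emeasure_eq_measure)
  have "law_transform M \<theta> = complex_of_real p + half_line_transform g \<theta>" if "Re \<theta> \<le> 0" for \<theta>
  proof -
    have integrable_pos: "integrable M (\<lambda>x. indicator {0<..} x *\<^sub>R exp (\<theta> * complex_of_real x))"
      using integrable_exp[OF that] by (rule integrable_mult_indicator[rotated]) simp
    have "law_transform M \<theta> = (CLINT x|M. complex_of_real (indicator {0} x)
        + indicator {0<..} x *\<^sub>R exp (\<theta> * complex_of_real x))"
      unfolding transform_def using AE_nonneg
      by (intro integral_cong_AE) (auto elim!: eventually_mono simp: indicator_def)
    also have "\<dots> = complex_of_real p + (CLINT x|M. indicator {0<..} x *\<^sub>R exp (\<theta> * complex_of_real x))"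
    proof (subst Bochner_Integration.integral_add[OF _ integrable_pos])
      show "integrable M (\<lambda>x. complex_of_real (indicator {0} x))"
        by (intro integrable_const_bound[where B=1]) (auto simp: indicator_def)
    qed (simp add: p_def)
    also have "(CLINT x|M. indicator {0<..} x *\<^sub>R exp (\<theta> * complex_of_real x))
        = (CLINT x|density M (\<lambda>x. ennreal (indicator {0<..} x)). exp (\<theta> * complex_of_real x))"
      by (subst integral_density) auto
    also have "\<dots> = (CLINT x|lborel. g x *\<^sub>R exp (\<theta> * complex_of_real x))"
      unfolding g_density
      using borel_measurable_integrable[OF g(1)] by (subst integral_density) (auto simp: g)
    also have "\<dots> = half_line_transform g \<theta>"
      unfolding half_line_transform_def
      by (intro Bochner_Integration.integral_cong) (auto simp: scaleR_conv_of_real indicator_def g(3))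
    finally show ?thesis .
  qed
  with \<open>0 < p\<close> g(1) show thesis by (rule that)
qed

lemma bounded_below_on_left_half_plane:
  fixes f :: "complex \<Rightarrow> complex"
  assumes continuous: "continuous_on {\<theta>. Re \<theta> \<le> 0} f"
    and nonzero: "\<And>\<theta>. Re \<theta> \<le> 0 \<Longrightarrow> f \<theta> \<noteq> 0"
    and vertical: "eventually (\<lambda>\<theta>. c \<le> norm (f \<theta>)) left_vertical_infinity"
    and far_left: "eventually (\<lambda>\<theta>. c \<le> norm (f \<theta>)) (filtercomap Re at_bot)"
    and "0 < c"
  shows "\<exists>b>0. \<forall>\<theta>. Re \<theta> \<le> 0 \<longrightarrow> b \<le> norm (f \<theta>)"
proof -
  obtain T where T: "\<And>\<theta>. Re \<theta> \<le> 0 \<Longrightarrow> T \<le> \<bar>Im \<theta>\<bar> \<Longrightarrow> c \<le> norm (f \<theta>)"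
    using vertical by (auto simp: eventually_left_vertical_infinity)
  obtain N where N: "\<And>\<theta>. Re \<theta> \<le> N \<Longrightarrow> c \<le> norm (f \<theta>)"
    using far_left by (auto simp: eventually_filtercomap_at_bot_linorder)
  define K where "K = cbox (Complex (min N 0) (- \<bar>T\<bar>)) (Complex 0 \<bar>T\<bar>)"
  have K: "K \<subseteq> {\<theta>. Re \<theta> \<le> 0}" "0 \<in> K" by (auto simp: K_def cbox_complex_eq)
  then obtain \<theta>\<^sub>m where "\<theta>\<^sub>m \<in> K" and minimal: "\<And>\<theta>. \<theta> \<in> K \<Longrightarrow> norm (f \<theta>\<^sub>m) \<le> norm (f \<theta>)"
    using continuous_attains_inf[of K "\<lambda>\<theta>. norm (f \<theta>)"]
      continuous_on_norm[OF continuous_on_subset[OF continuous K(1)]]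
    by (auto simp: K_def)
  have "0 < norm (f \<theta>\<^sub>m)" using nonzero \<open>\<theta>\<^sub>m \<in> K\<close> K(1) by auto
  moreover have "min (norm (f \<theta>\<^sub>m)) c \<le> norm (f \<theta>)" if "Re \<theta> \<le> 0" for \<theta>
  proof (cases "\<theta> \<in> K")
    case False
    then have "Re \<theta> \<le> N \<or> T \<le> \<bar>Im \<theta>\<bar>" using that by (auto simp: K_def cbox_complex_eq)
    then show ?thesis using N T that by force
  qed (use minimal in \<open>force intro: min.coboundedI1\<close>)
  ultimately show ?thesis using \<open>0 < c\<close> by (intro exI[of _ "min (norm (f \<theta>\<^sub>m)) c"]) auto
qed

locale good_law = nonneg_real_distribution +
  assumes atom0_density: "atom0_density_law M"
    and law_transform_nonzero: "\<And>\<theta>. Re \<theta> \<le> 0 \<Longrightarrow> law_transform M \<theta> \<noteq> 0"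
begin

lemma law_transform_bounded_below: "\<exists>b>0. \<forall>\<theta>. Re \<theta> \<le> 0 \<longrightarrow> b \<le> norm (law_transform M \<theta>)"
proof -
  obtain p g where "0 < p" and g: "integrable lborel g"
    and decomposition: "\<And>\<theta>. Re \<theta> \<le> 0 \<Longrightarrow> law_transform M \<theta> = complex_of_real p + half_line_transform g \<theta>"
    using law_transform_eq_atom_plus_half_line_transform[OF atom0_density] by blast
  have near_atom: "eventually (\<lambda>\<theta>. p / 2 \<le> norm (law_transform M \<theta>)) F"
    if "(half_line_transform g \<longlongrightarrow> 0) F" "eventually (\<lambda>\<theta>. Re \<theta> \<le> 0) F" for F
  proof -
    have "eventually (\<lambda>\<theta>. norm (half_line_transform g \<theta>) < p / 2) F"
      using order_tendstoD(2)[OF tendsto_norm_zero[OF that(1)], of "p / 2"] \<open>0 < p\<close> by simp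
    with that(2) show ?thesis
    proof eventually_elim
      case (elim \<theta>)
      then show ?case
        using decomposition[of \<theta>] norm_triangle_ineq2[of "complex_of_real p" "- half_line_transform g \<theta>"]
          \<open>0 < p\<close> by simp
    qed
  qed
  show ?thesis
  proof (rule bounded_below_on_left_half_plane)
    show "continuous_on {\<theta>. Re \<theta> \<le> 0} (law_transform M)" by (rule continuous_on_law_transform)
    show "eventually (\<lambda>\<theta>. p / 2 \<le> norm (law_transform M \<theta>)) left_vertical_infinity"
      by (intro near_atom Riemann_Lebesgue_half_line_transform g eventually_Re_nonpos_left_vertical_infinity)
    show "eventually (\<lambda>\<theta>. p / 2 \<le> norm (law_transform M \<theta>)) (filtercomap Re at_bot)"
      by (intro near_atom tendsto_half_line_transform_Re_at_bot g)
        (auto simp: eventually_filtercomap_at_bot_linorder)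
  qed (use law_transform_nonzero \<open>0 < p\<close> in auto)
qed

end

section \<open>Gluing along the imaginary axis\<close>

lemma (in good_law)
  assumes "nonneg_real_distribution \<mu>"
  shows continuous_on_law_transform_quotient:
      "continuous_on {\<theta>. Re \<theta> \<le> 0} (\<lambda>\<theta>. law_transform \<mu> \<theta> / law_transform M \<theta>)"
    and holomorphic_on_law_transform_quotient:
      "(\<lambda>\<theta>. law_transform \<mu> \<theta> / law_transform M \<theta>) holomorphic_on {\<theta>. Re \<theta> < 0}"
    and bounded_law_transform_quotient:
      "\<exists>B. \<forall>\<theta>. Re \<theta> \<le> 0 \<longrightarrow> norm (law_transform \<mu> \<theta> / law_transform M \<theta>) \<le> B"
proof -
  interpret \<mu>: nonneg_real_distribution \<mu> by (rule assms)
  show "continuous_on {\<theta>. Re \<theta> \<le> 0} (\<lambda>\<theta>. law_transform \<mu> \<theta> / law_transform M \<theta>)"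
    using law_transform_nonzero
    by (intro continuous_on_divide \<mu>.continuous_on_law_transform continuous_on_law_transform) auto
  show "(\<lambda>\<theta>. law_transform \<mu> \<theta> / law_transform M \<theta>) holomorphic_on {\<theta>. Re \<theta> < 0}"
    using law_transform_nonzero
    by (intro holomorphic_on_divide \<mu>.holomorphic_on_law_transform holomorphic_on_law_transform) auto
  obtain b where "0 < b" and b: "\<And>\<theta>. Re \<theta> \<le> 0 \<Longrightarrow> b \<le> norm (law_transform M \<theta>)"
    using law_transform_bounded_below by blast
  have "norm (law_transform \<mu> \<theta> / law_transform M \<theta>) \<le> 1 / b" if "Re \<theta> \<le> 0" for \<theta>
    unfolding norm_divide using \<mu>.norm_law_transform_le_1[OF that] b[OF that] \<open>0 < b\<close>
    by (intro frac_le) auto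
  then show "\<exists>B. \<forall>\<theta>. Re \<theta> \<le> 0 \<longrightarrow> norm (law_transform \<mu> \<theta> / law_transform M \<theta>) \<le> B"
    by blast
qed

lemma Liouville_glued_half_planes:
  fixes f g :: "complex \<Rightarrow> complex"
  assumes f: "continuous_on {z. Re z \<le> 0} f" "f holomorphic_on {z. Re z < 0}"
    and g: "continuous_on {z. Re z \<le> 0} g" "g holomorphic_on {z. Re z < 0}"
    and agree: "\<And>z. Re z = 0 \<Longrightarrow> f z = g (- z)"
    and f_bounded: "\<And>z. Re z \<le> 0 \<Longrightarrow> norm (f z) \<le> B"
    and g_bounded: "\<And>z. Re z \<le> 0 \<Longrightarrow> norm (g z) \<le> B"
    and "Re z \<le> 0"
  shows "f z = f 0"
proof -
  define G where "G z = (if Re z \<le> 0 then f z else g (- z))" for z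
  have "continuous_on UNIV G"
    unfolding G_def
  proof (rule continuous_on_cases_le)
    show "continuous_on {z \<in> UNIV. 0 \<le> Re z} (\<lambda>z. g (- z))"
      by (rule continuous_on_compose2[OF g(1)]) (auto intro: continuous_intros)
  qed (use f(1) agree in \<open>auto intro: continuous_intros\<close>)
  moreover have "G holomorphic_on {z. Re z < 0}"
    by (rule holomorphic_transform[OF f(2)]) (auto simp: G_def)
  moreover have "G holomorphic_on {z. 0 < Re z}"
  proof (rule holomorphic_transform)
    have "uminus ` {z. 0 < Re z} \<subseteq> {z. Re z < 0}" by auto
    then show "(\<lambda>z. g (- z)) holomorphic_on {z. 0 < Re z}"
      by (intro holomorphic_on_compose_gen[OF _ g(2), unfolded o_def] holomorphic_intros)
  qed (auto simp: G_def)
  moreover have "UNIV \<inter> {z. 1 \<bullet> z < 0} = {z. Re z < 0}" "UNIV \<inter> {z. 0 < 1 \<bullet> z} = {z. 0 < Re z}"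
    by (auto simp: inner_complex_def)
  ultimately have "G holomorphic_on UNIV"
    using holomorphic_on_paste_across_line[of UNIV 1 G 0] by auto
  moreover have "bounded (range G)"
    unfolding bounded_iff G_def using f_bounded g_bounded by (intro exI[of _ B]) auto
  ultimately have "G z = G 0"
    using Liouville_theorem by (metis UNIV_I constant_on_def)
  then show ?thesis using \<open>Re z \<le> 0\<close> by (simp add: G_def)
qed

lemma good_laws_eq_if_char_products_eq:
  assumes "good_law \<mu>\<^sub>1" "good_law \<mu>\<^sub>2" "good_law \<nu>\<^sub>1" "good_law \<nu>\<^sub>2"
    and char_products: "\<And>t. char \<mu>\<^sub>1 t * char \<mu>\<^sub>2 (- t) = char \<nu>\<^sub>1 t * char \<nu>\<^sub>2 (- t)"
  shows "\<mu>\<^sub>1 = \<nu>\<^sub>1 \<and> \<mu>\<^sub>2 = \<nu>\<^sub>2"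
proof -
  interpret \<mu>\<^sub>1: good_law \<mu>\<^sub>1 by (rule assms(1))
  interpret \<mu>\<^sub>2: good_law \<mu>\<^sub>2 by (rule assms(2))
  interpret \<nu>\<^sub>1: good_law \<nu>\<^sub>1 by (rule assms(3))
  interpret \<nu>\<^sub>2: good_law \<nu>\<^sub>2 by (rule assms(4))
  define f where "f \<theta> = law_transform \<mu>\<^sub>1 \<theta> / law_transform \<nu>\<^sub>1 \<theta>" for \<theta>
  define g where "g \<theta> = law_transform \<nu>\<^sub>2 \<theta> / law_transform \<mu>\<^sub>2 \<theta>" for \<theta>
  have agree: "f \<theta> = g (- \<theta>)" if "Re \<theta> = 0" for \<theta>
  proof -
    have "\<theta> = \<i> * complex_of_real (Im \<theta>)" using that by (simp add: complex_eq_iff)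
    then have "law_transform \<mu>\<^sub>1 \<theta> * law_transform \<mu>\<^sub>2 (- \<theta>) = law_transform \<nu>\<^sub>1 \<theta> * law_transform \<nu>\<^sub>2 (- \<theta>)"
      using char_products[of "Im \<theta>"] by (metis char_eq_law_transform mult_minus_right of_real_minus)
    then show ?thesis
      using \<nu>\<^sub>1.law_transform_nonzero[of \<theta>] \<mu>\<^sub>2.law_transform_nonzero[of "- \<theta>"] that
      by (simp add: f_def g_def field_simps)
  qed
  obtain B\<^sub>f where B\<^sub>f: "\<And>\<theta>. Re \<theta> \<le> 0 \<Longrightarrow> norm (f \<theta>) \<le> B\<^sub>f"
    using \<nu>\<^sub>1.bounded_law_transform_quotient[OF \<mu>\<^sub>1.nonneg_real_distribution_axioms] unfolding f_def by blast
  obtain B\<^sub>g where B\<^sub>g: "\<And>\<theta>. Re \<theta> \<le> 0 \<Longrightarrow> norm (g \<theta>) \<le> B\<^sub>g"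
    using \<mu>\<^sub>2.bounded_law_transform_quotient[OF \<nu>\<^sub>2.nonneg_real_distribution_axioms] unfolding g_def by blast
  have f_eq_1: "f \<theta> = 1" if "Re \<theta> \<le> 0" for \<theta>
  proof -
    have "f \<theta> = f 0"
    proof (rule Liouville_glued_half_planes[where g=g and B="max B\<^sub>f B\<^sub>g"])
      show "continuous_on {z. Re z \<le> 0} f" "f holomorphic_on {z. Re z < 0}"
        unfolding f_def[abs_def] using \<mu>\<^sub>1.nonneg_real_distribution_axioms
        by (rule \<nu>\<^sub>1.continuous_on_law_transform_quotient \<nu>\<^sub>1.holomorphic_on_law_transform_quotient)+
      show "continuous_on {z. Re z \<le> 0} g" "g holomorphic_on {z. Re z < 0}"
        unfolding g_def[abs_def] using \<nu>\<^sub>2.nonneg_real_distribution_axioms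
        by (rule \<mu>\<^sub>2.continuous_on_law_transform_quotient \<mu>\<^sub>2.holomorphic_on_law_transform_quotient)+
      show "norm (f z) \<le> max B\<^sub>f B\<^sub>g" "norm (g z) \<le> max B\<^sub>f B\<^sub>g" if "Re z \<le> 0" for z
        using B\<^sub>f[OF that] B\<^sub>g[OF that] by linarith+
    qed (use agree that in auto)
    then show ?thesis by (simp add: f_def \<mu>\<^sub>1.law_transform_0 \<nu>\<^sub>1.law_transform_0)
  qed
  have "char \<mu>\<^sub>1 t = char \<nu>\<^sub>1 t" for t
    using f_eq_1[of "\<i> * complex_of_real t"] \<nu>\<^sub>1.law_transform_nonzero[of "\<i> * complex_of_real t"]
    by (simp add: f_def char_eq_law_transform)
  moreover have "char \<mu>\<^sub>2 t = char \<nu>\<^sub>2 t" for t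
    using f_eq_1[of "- \<i> * complex_of_real t"] agree[of "- \<i> * complex_of_real t"]
      \<mu>\<^sub>2.law_transform_nonzero[of "\<i> * complex_of_real t"]
    by (simp add: g_def char_eq_law_transform)
  ultimately show ?thesis
    using Levy_uniqueness[of \<mu>\<^sub>1 \<nu>\<^sub>1] Levy_uniqueness[of \<mu>\<^sub>2 \<nu>\<^sub>2]
    by (auto simp: \<mu>\<^sub>1.real_distribution_axioms \<nu>\<^sub>1.real_distribution_axioms
        \<mu>\<^sub>2.real_distribution_axioms \<nu>\<^sub>2.real_distribution_axioms fun_eq_iff)
qed

lemma good_law_distr:
  assumes "prob_space M" "good_rv M Z"
  shows "good_law (distr M borel Z)"
proof -
  interpret prob_space M by (rule assms(1))
  have [measurable]: "Z \<in> borel_measurable M" using assms(2) by (simp add: good_rv_def)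
  have "law_transform (distr M borel Z) \<theta> = transform M Z \<theta>" for \<theta>
    unfolding transform_def by (subst integral_distr) auto
  moreover have "real_distribution (distr M borel Z)" by (rule real_distribution_distr) simp
  moreover have "AE x in distr M borel Z. 0 \<le> x"
    using assms(2) by (subst AE_distr_iff) (auto simp: good_rv_def)
  ultimately show ?thesis
    using assms(2)
    by (simp add: good_law_def good_law_axioms_def nonneg_real_distribution_def
        nonneg_real_distribution_axioms_def good_rv_def)
qed

lemma (in prob_space) char_distr_diff:
  fixes Z\<^sub>1 Z\<^sub>2 :: "'a \<Rightarrow> real"
  assumes "indep_var borel Z\<^sub>1 borel Z\<^sub>2"
  shows "char (distr M borel (\<lambda>x. Z\<^sub>1 x - Z\<^sub>2 x)) t = char (distr M borel Z\<^sub>1) t * char (distr M borel Z\<^sub>2) (- t)"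
proof -
  have [measurable]: "Z\<^sub>2 \<in> borel_measurable M"
    using indep_var_rv2[OF assms] by simp
  have "indep_var borel (id \<circ> Z\<^sub>1) borel (uminus \<circ> Z\<^sub>2)"
    by (rule indep_var_compose[OF assms]) auto
  then have "char (distr M borel (\<lambda>x. Z\<^sub>1 x + - Z\<^sub>2 x)) t = char (distr M borel Z\<^sub>1) t * char (distr M borel (\<lambda>x. - Z\<^sub>2 x)) t"
    by (intro char_distr_add) (simp add: o_def)
  moreover have "char (distr M borel (\<lambda>x. - Z\<^sub>2 x)) t = char (distr M borel Z\<^sub>2) (- t)"
    unfolding char_def by (simp add: integral_distr)
  ultimately show ?thesis by simp
qed

theorem lemma5p1:
  fixes M :: "'a measure" and M' :: "'b measure"
    and Z1 Z2 :: "'a \<Rightarrow> real" and Z1' Z2' :: "'b \<Rightarrow> real"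
  assumes "prob_space M" and "prob_space M'"
    and "good_rv M Z1" and "good_rv M Z2"
    and "good_rv M' Z1'" and "good_rv M' Z2'"
    and "prob_space.indep_var M borel Z1 borel Z2"
    and "prob_space.indep_var M' borel Z1' borel Z2'"
    and "distr M borel (\<lambda>x. Z1 x - Z2 x) = distr M' borel (\<lambda>x. Z1' x - Z2' x)"
  shows "distr M borel Z1 = distr M' borel Z1' \<and> distr M borel Z2 = distr M' borel Z2'"
proof (rule good_laws_eq_if_char_products_eq)
  show "good_law (distr M borel Z1)" "good_law (distr M borel Z2)"
    "good_law (distr M' borel Z1')" "good_law (distr M' borel Z2')"
    using good_law_distr assms(1-6) by auto
  show "char (distr M borel Z1) t * char (distr M borel Z2) (- t) =
      char (distr M' borel Z1') t * char (distr M' borel Z2') (- t)" for t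
    using prob_space.char_distr_diff[OF assms(1,7), of t] prob_space.char_distr_diff[OF assms(2,8), of t]
      assms(9) by simp
qed

end
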